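(* Let $G$ be a non-cyclic simple dimension group admitting a trace with rational values, i.e. a nonzero homomorphism $\tau:G\to\mathbb R$ with $\tau(G^+)\ge0$ and $\tau(G)\subseteq\mathbb Q$. Then $G$ is globally irrationally miscible.
   Context: A dimension group is an unperforated partially ordered abelian group with the Riesz interpolation property; simple means no nontrivial order ideals (then every nonzero positive element is an order unit). For an order unit $u$, $S(G,u)$ is the set of states (homomorphisms $\sigma:G\to\mathbb R$, $\sigma(G^+)\ge0$, $\sigma(u)=1$); $J(G,u)=\{g:\sigma\mapsto\sigma(g)\text{ constant on }S(G,u)\}$ and $\Phi(g)$ is the constant. $(G,u)$ is irrationally miscible if $\Phi(J(G,u))\subseteq\mathbb Q$; $G$ is globally irrationally miscible if $(G,u)$ is irrationally miscible for every order unit $u$. *)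

theory Defs
  imports Complex_Main
begin

text \<open>A partially ordered abelian group is modelled as a type of class ab_group_add
  together with its positive cone P; x \<le> y means y - x \<in> P.\<close>

definition zsc :: "int \<Rightarrow> 'a::ab_group_add \<Rightarrow> 'a" where
  "zsc n g = (if 0 \<le> n then (\<Sum>_\<in>{..<nat n}. g) else - (\<Sum>_\<in>{..<nat (-n)}. g))"

definition nsc :: "nat \<Rightarrow> 'a::ab_group_add \<Rightarrow> 'a" where
  "nsc n g = (\<Sum>_\<in>{..<n}. g)"

definition po_group :: "'a::ab_group_add set \<Rightarrow> bool" where
  "po_group P \<longleftrightarrow> 0 \<in> P \<and> (\<forall>x\<in>P. \<forall>y\<in>P. x + y \<in> P) \<and>
     (\<forall>x. x \<in> P \<and> - x \<in> P \<longrightarrow> x = 0)"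

definition unperforated :: "'a::ab_group_add set \<Rightarrow> bool" where
  "unperforated P \<longleftrightarrow> (\<forall>n::nat. \<forall>g. n \<ge> 1 \<and> nsc n g \<in> P \<longrightarrow> g \<in> P)"

definition riesz_interpolation :: "'a::ab_group_add set \<Rightarrow> bool" where
  "riesz_interpolation P \<longleftrightarrow> (\<forall>a1 a2 b1 b2.
     b1 - a1 \<in> P \<and> b2 - a1 \<in> P \<and> b1 - a2 \<in> P \<and> b2 - a2 \<in> P \<longrightarrow>
     (\<exists>c. c - a1 \<in> P \<and> c - a2 \<in> P \<and> b1 - c \<in> P \<and> b2 - c \<in> P))"

definition dimension_group :: "'a::ab_group_add set \<Rightarrow> bool" where
  "dimension_group P \<longleftrightarrow> po_group P \<and> unperforated P \<and> riesz_interpolation P"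

definition order_ideal :: "'a::ab_group_add set \<Rightarrow> 'a set \<Rightarrow> bool" where
  "order_ideal P I \<longleftrightarrow> 0 \<in> I \<and> (\<forall>x\<in>I. \<forall>y\<in>I. x - y \<in> I) \<and>
     (\<forall>x\<in>I. \<exists>a b. a \<in> I \<inter> P \<and> b \<in> I \<inter> P \<and> x = a - b) \<and>
     (\<forall>x y. x \<in> P \<and> y \<in> I \<and> y - x \<in> P \<longrightarrow> x \<in> I)"

definition simple_group :: "'a::ab_group_add set \<Rightarrow> bool" where
  "simple_group P \<longleftrightarrow> (UNIV :: 'a set) \<noteq> {0} \<and>
     (\<forall>I. order_ideal P I \<longrightarrow> I = {0} \<or> I = UNIV)"

definition cyclic_group :: "'a::ab_group_add itself \<Rightarrow> bool" where
  "cyclic_group _ \<longleftrightarrow> (\<exists>g::'a. \<forall>x. \<exists>n. x = zsc n g)"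

definition order_unit :: "'a::ab_group_add set \<Rightarrow> 'a \<Rightarrow> bool" where
  "order_unit P u \<longleftrightarrow> u \<in> P \<and> (\<forall>x. \<exists>n::nat. nsc n u - x \<in> P \<and> x + nsc n u \<in> P)"

definition additive :: "('a::ab_group_add \<Rightarrow> real) \<Rightarrow> bool" where
  "additive f \<longleftrightarrow> (\<forall>x y. f (x + y) = f x + f y)"

definition states :: "'a::ab_group_add set \<Rightarrow> 'a \<Rightarrow> ('a \<Rightarrow> real) set" where
  "states P u = {\<sigma>. additive \<sigma> \<and> (\<forall>x\<in>P. \<sigma> x \<ge> 0) \<and> \<sigma> u = 1}"

definition Jset :: "'a::ab_group_add set \<Rightarrow> 'a \<Rightarrow> 'a set" where
  "Jset P u = {g. \<exists>c. \<forall>\<sigma>\<in>states P u. \<sigma> g = c}"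

definition Phi :: "'a::ab_group_add set \<Rightarrow> 'a \<Rightarrow> 'a \<Rightarrow> real" where
  "Phi P u g = (THE c. \<forall>\<sigma>\<in>states P u. \<sigma> g = c)"

definition irrationally_miscible :: "'a::ab_group_add set \<Rightarrow> 'a \<Rightarrow> bool" where
  "irrationally_miscible P u \<longleftrightarrow> Phi P u ` Jset P u \<subseteq> \<rat>"

definition globally_irrationally_miscible :: "'a::ab_group_add set \<Rightarrow> bool" where
  "globally_irrationally_miscible P \<longleftrightarrow> (\<forall>u. order_unit P u \<longrightarrow> irrationally_miscible P u)"

end

theory Submission
  imports Defs
begin

text \<open>Normalising the rational trace at an order unit \<open>u\<close> gives a state, and on \<open>J(G,u)\<close>
  every state takes the value \<open>\<Phi>\<close>; hence \<open>\<Phi>(g) = \<tau>(g) / \<tau>(u)\<close> is rational.\<close>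

lemma additive_zero: "additive f \<Longrightarrow> f 0 = 0"
  unfolding additive_def by (metis add.right_neutral add_cancel_right_right)

lemma additive_diff: "additive f \<Longrightarrow> f (x - y) = f x - f y"
  unfolding additive_def by (metis diff_add_cancel eq_diff_eq)

lemma additive_nsc: "additive f \<Longrightarrow> f (nsc n u) = real n * f u"
proof (induction n)
  case 0
  then show ?case by (simp add: nsc_def additive_zero)
next
  case (Suc n)
  have "nsc (Suc n) u = u + nsc n u" by (simp add: nsc_def lessThan_Suc)
  then show ?case using Suc by (simp add: additive_def algebra_simps)
qed

lemma positive_additive_order_unit_pos:
  assumes "additive f" and "\<forall>x\<in>P. f x \<ge> 0" and "f g \<noteq> 0" and "order_unit P u"
  shows "f u > 0"
proof (rule ccontr)
  assume "\<not> f u > 0"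
  moreover have "f u \<ge> 0" using assms(2,4) unfolding order_unit_def by auto
  ultimately have fu: "f u = 0" by simp
  obtain n where "nsc n u - g \<in> P" "g + nsc n u \<in> P"
    using assms(4) unfolding order_unit_def by blast
  then have "f (nsc n u - g) \<ge> 0" "f (g + nsc n u) \<ge> 0" using assms(2) by auto
  then have "- f g \<ge> 0" "f g \<ge> 0"
    using fu additive_nsc[OF assms(1)] additive_diff[OF assms(1)] assms(1)
    unfolding additive_def by auto
  with assms(3) show False by simp
qed

lemma normalized_in_states:
  assumes "additive f" and "\<forall>x\<in>P. f x \<ge> 0" and "f u > 0"
  shows "(\<lambda>x. f x / f u) \<in> states P u"
  using assms unfolding states_def by (auto simp: additive_def add_divide_distrib)

lemma Phi_eq_state:
  assumes "g \<in> Jset P u" and "\<sigma> \<in> states P u"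
  shows "Phi P u g = \<sigma> g"
proof -
  obtain c where c: "\<forall>\<sigma>\<in>states P u. \<sigma> g = c" using assms(1) unfolding Jset_def by blast
  have "Phi P u g = c" unfolding Phi_def
    by (rule the_equality) (use c assms(2) in auto)
  with c assms(2) show ?thesis by simp
qed

theorem mainTheorem13:
  fixes P :: "'a::ab_group_add set" and \<tau> :: "'a \<Rightarrow> real"
  assumes "dimension_group P"
    and "simple_group P"
    and "\<not> cyclic_group TYPE('a)"
    and "additive \<tau>" and "\<exists>g. \<tau> g \<noteq> 0"
    and "\<forall>x\<in>P. \<tau> x \<ge> 0"
    and "range \<tau> \<subseteq> \<rat>"
  shows "globally_irrationally_miscible P"
  unfolding globally_irrationally_miscible_def irrationally_miscible_def
proof (intro allI impI image_subsetI)
  fix u g assume u: "order_unit P u" and g: "g \<in> Jset P u"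
  have "\<tau> u > 0"
    using assms(4,5,6) u positive_additive_order_unit_pos by blast
  then have "Phi P u g = \<tau> g / \<tau> u"
    using Phi_eq_state[OF g normalized_in_states[OF assms(4,6)]] by simp
  moreover have "\<tau> g \<in> \<rat>" "\<tau> u \<in> \<rat>" using assms(7) by auto
  ultimately show "Phi P u g \<in> \<rat>" by simp
qed

end
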